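(* Let $n\ge 2$, $F$ the free group on $g_1,\dots,g_n$, $F^{(1)}=[F,F]$, $F^{(2)}=[F^{(1)},F^{(1)}]$, $\Lambda_n=\mathbb{Z}[t_1,t_1^{-1},\dots,t_n,t_n^{-1}]$, and let $\mu_1:F\to \mathrm{SL}(2,\Lambda_n)$ be the group homomorphism with $\mu_1(g_i)=\begin{bmatrix} t_i&0\\ 1&t_i^{-1}\end{bmatrix}$ for $1\le i\le n$. Let $w\in F^{(1)}\setminus F^{(2)}$. Then there exists a nonzero Laurent polynomial $\mathcal{L}_w\in\Lambda_n$ such that $$\mu_1(w)=\begin{bmatrix} 1&0\\ \mathcal{L}_w&1\end{bmatrix}.$$ *)

theory Defs
  imports "HOL-Library.Poly_Mapping" "HOL-Algebra.Generated_Groups"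
begin

text \<open>A letter (i, False) stands for g_i, (i, True) for its inverse g_i^{-1}.\<close>
type_synonym letter = "nat \<times> bool"

definition inv_letter :: "letter \<Rightarrow> letter" where
  "inv_letter l = (fst l, \<not> snd l)"

fun reduced :: "letter list \<Rightarrow> bool" where
  "reduced (a # b # w) = (b \<noteq> inv_letter a \<and> reduced (b # w))"
| "reduced _ = True"

definition reduce :: "letter list \<Rightarrow> letter list" where
  "reduce w = foldr (\<lambda>a acc. case acc of
       [] \<Rightarrow> [a]
     | b # r \<Rightarrow> (if b = inv_letter a then r else a # acc)) w []"

definition free_group :: "nat \<Rightarrow> letter list monoid" where
  "free_group n = \<lparr> carrier = {w. (\<forall>l \<in> set w. fst l \<in> {1..n}) \<and> reduced w},
                    mult = (\<lambda>x y. reduce (x @ y)),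
                    one = [] \<rparr>"

text \<open>Exponent vectors are finitely supported maps nat \<Rightarrow> int; variable t_i has exponent
  vector single i 1.  Lambda_n is the subring generated by t_1^{\<pm>1},...,t_n^{\<pm>1}.\<close>
type_synonym laurent = "(nat \<Rightarrow>\<^sub>0 int) \<Rightarrow>\<^sub>0 int"

definition lvar :: "nat \<Rightarrow> int \<Rightarrow> laurent" where
  "lvar i k = Poly_Mapping.single (Poly_Mapping.single i k) 1"

type_synonym mat2 = "laurent \<times> laurent \<times> laurent \<times> laurent"
  \<comment> \<open>(a, b, c, d) stands for the matrix [[a, b], [c, d]]\<close>

definition mat2_mult :: "mat2 \<Rightarrow> mat2 \<Rightarrow> mat2" where
  "mat2_mult M N = (case M of (a, b, c, d) \<Rightarrow> case N of (e, f, g, h) \<Rightarrow>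
      (a*e + b*g, a*f + b*h, c*e + d*g, c*f + d*h))"

definition mat2_id :: mat2 where "mat2_id = (1, 0, 0, 1)"

definition letter_mat :: "letter \<Rightarrow> mat2" where
  "letter_mat l = (if snd l then (lvar (fst l) (-1), 0, -1, lvar (fst l) 1)
                   else (lvar (fst l) 1, 0, 1, lvar (fst l) (-1)))"

definition mu1 :: "letter list \<Rightarrow> mat2" where
  "mu1 w = foldr (\<lambda>l M. mat2_mult (letter_mat l) M) w mat2_id"

end

theory Submission
  imports Defs
begin

text \<open>Read a word \<open>w\<close> as a walk in the Cayley graph of \<open>\<int>\<^sup>n = F/F'\<close>, in which a letter
  g_i^(\<plusminus>1) traverses the edge (q, i) joining q and q + e_i forwards or backwards. Multiplying
  out \<open>\<mu>\<^sub>1(w)\<close>, the diagonal entries are t^(\<plusminus>abel w) and each traversal of (q, i) contributes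
  \<plusminus>t^(-2q - e_i) to the lower left entry. As (q, i) \<mapsto> -2q - e_i is injective, for w in F' that
  entry vanishes only if every edge is traversed equally often in both directions. On the other
  hand, with T(q) = g_1^q_1 \<cdots> g_n^q_n, the word w telescopes into the product of the Schreier
  generators T(q) g_i T(q + e_i)^(-1) of F' along its walk; when all net traversal counts vanish,
  this product is trivial in the abelianization of F', so w lies in F''.\<close>

definition reduce_step :: "letter \<Rightarrow> letter list \<Rightarrow> letter list" where
  "reduce_step a acc =
     (case acc of [] \<Rightarrow> [a] | b # r \<Rightarrow> (if b = inv_letter a then r else a # acc))"

lemma reduce_eq_foldr: "reduce w = foldr reduce_step w []"
  unfolding reduce_def reduce_step_def by simp

lemma inv_letter_inv_letter [simp]: "inv_letter (inv_letter a) = a"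
  by (simp add: inv_letter_def)

lemma inv_letter_eq_iff: "inv_letter a = b \<longleftrightarrow> a = inv_letter b"
  by (auto simp add: inv_letter_def)

lemma reduced_ConsD: "reduced (a # w) \<Longrightarrow> reduced w"
  by (cases w) auto

lemma reduced_reduce_step: "reduced acc \<Longrightarrow> reduced (reduce_step a acc)"
  by (cases acc) (auto simp: reduce_step_def intro: reduced_ConsD)

lemma reduced_foldr_reduce_step: "reduced acc \<Longrightarrow> reduced (foldr reduce_step x acc)"
  by (induction x) (auto intro: reduced_reduce_step)

lemma reduced_reduce: "reduced (reduce w)"
  by (simp add: reduce_eq_foldr reduced_foldr_reduce_step)

lemma reduce_step_reduced: "reduced (a # w) \<Longrightarrow> reduce_step a w = a # w"
  by (cases w) (auto simp: reduce_step_def inv_letter_eq_iff)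

lemma reduce_reduced: "reduced w \<Longrightarrow> reduce w = w"
  by (induction w) (simp_all add: reduce_eq_foldr reduced_ConsD reduce_step_reduced)

lemma reduce_append: "reduce (x @ y) = foldr reduce_step x (reduce y)"
  by (simp add: reduce_eq_foldr)

lemma reduce_step_inv_letter: "reduced s \<Longrightarrow> reduce_step a (reduce_step (inv_letter a) s) = s"
  by (cases s)
    (auto simp: reduce_step_def inv_letter_eq_iff reduce_step_reduced[unfolded reduce_step_def])

lemma foldr_reduce_step_reduce_step:
  assumes "reduced u" "reduced v"
  shows "foldr reduce_step (reduce_step a u) v = reduce_step a (foldr reduce_step u v)"
proof (cases u)
  case (Cons b r)
  have "reduced (foldr reduce_step r v)"
    using assms Cons by (simp add: reduced_foldr_reduce_step reduced_ConsD)
  then show ?thesis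
    using Cons reduce_step_inv_letter[of "foldr reduce_step r v" a]
    by (auto simp: reduce_step_def)
qed (simp add: reduce_step_def)

lemma foldr_reduce_step_assoc:
  assumes "reduced u" "reduced v"
  shows "foldr reduce_step (foldr reduce_step x u) v = foldr reduce_step x (foldr reduce_step u v)"
  using assms
  by (induction x) (simp_all add: foldr_reduce_step_reduce_step reduced_foldr_reduce_step)

lemma set_reduce: "set (reduce w) \<subseteq> set w"
proof -
  have "set (foldr reduce_step x acc) \<subseteq> set x \<union> set acc" for x acc
    by (induction x) (auto simp: reduce_step_def split: list.splits)
  from this[of w "[]"] show ?thesis by (simp add: reduce_eq_foldr)
qed

lemma foldr_reduce_step_inverse:
  "reduced w \<Longrightarrow> foldr reduce_step (rev (map inv_letter w)) w = []"
  by (induction w) (simp_all add: reduce_step_def reduced_ConsD)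

lemma carrier_free_group:
  "w \<in> carrier (free_group n) \<longleftrightarrow> (\<forall>l\<in>set w. fst l \<in> {1..n}) \<and> reduced w"
  by (simp add: free_group_def)

lemma mult_free_group: "x \<otimes>\<^bsub>free_group n\<^esub> y = reduce (x @ y)"
  and one_free_group: "\<one>\<^bsub>free_group n\<^esub> = []"
  by (simp_all add: free_group_def)

lemma reduce_in_carrier_free_group:
  "\<forall>l\<in>set w. fst l \<in> {1..n} \<Longrightarrow> reduce w \<in> carrier (free_group n)"
  using set_reduce[of w] by (auto simp: carrier_free_group reduced_reduce)

lemma group_free_group: "group (free_group n)"
proof (rule groupI)
  fix x y z
  assume x: "x \<in> carrier (free_group n)" and y: "y \<in> carrier (free_group n)"
    and z: "z \<in> carrier (free_group n)"
  show "x \<otimes>\<^bsub>free_group n\<^esub> y \<in> carrier (free_group n)"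
    using x y unfolding mult_free_group
    by (intro reduce_in_carrier_free_group) (auto simp: carrier_free_group)
  show "x \<otimes>\<^bsub>free_group n\<^esub> y \<otimes>\<^bsub>free_group n\<^esub> z = x \<otimes>\<^bsub>free_group n\<^esub> (y \<otimes>\<^bsub>free_group n\<^esub> z)"
    using x y z reduced_foldr_reduce_step[of z y]
    by (simp add: mult_free_group carrier_free_group reduce_append reduce_reduced reduced_reduce
        foldr_reduce_step_assoc)
next
  fix x
  assume x: "x \<in> carrier (free_group n)"
  then show "\<one>\<^bsub>free_group n\<^esub> \<otimes>\<^bsub>free_group n\<^esub> x = x"
    by (simp add: mult_free_group one_free_group carrier_free_group reduce_reduced)
  let ?y = "reduce (rev (map inv_letter x))"
  have "?y \<in> carrier (free_group n)"
    using x by (intro reduce_in_carrier_free_group) (auto simp: carrier_free_group inv_letter_def)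
  moreover have "?y \<otimes>\<^bsub>free_group n\<^esub> x = \<one>\<^bsub>free_group n\<^esub>"
    using x foldr_reduce_step_assoc[of "[]" x "rev (map inv_letter x)"]
    by (simp add: mult_free_group one_free_group carrier_free_group reduce_append reduce_reduced
        reduce_eq_foldr[of "rev _"] foldr_reduce_step_inverse)
  ultimately show "\<exists>y\<in>carrier (free_group n). y \<otimes>\<^bsub>free_group n\<^esub> x = \<one>\<^bsub>free_group n\<^esub>" ..
qed (simp add: one_free_group carrier_free_group)

definition sign :: "bool \<Rightarrow> int" where
  "sign b = (if b then -1 else 1)"

definition letter_abel :: "letter \<Rightarrow> nat \<Rightarrow>\<^sub>0 int" where
  "letter_abel l = Poly_Mapping.single (fst l) (sign (snd l))"

definition abel :: "letter list \<Rightarrow> nat \<Rightarrow>\<^sub>0 int" where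
  "abel w = (\<Sum>l\<leftarrow>w. letter_abel l)"

lemma abel_Nil [simp]: "abel [] = 0"
  and abel_Cons [simp]: "abel (l # w) = letter_abel l + abel w"
  and abel_append: "abel (x @ y) = abel x + abel y"
  by (simp_all add: abel_def)

lemma letter_abel_inv_letter: "letter_abel (inv_letter a) = - letter_abel a"
  by (simp add: letter_abel_def inv_letter_def sign_def single_uminus)

lemma abel_reduce_step: "abel (reduce_step a acc) = letter_abel a + abel acc"
  by (cases acc) (auto simp: reduce_step_def letter_abel_inv_letter)

lemma abel_reduce: "abel (reduce w) = abel w"
proof -
  have "abel (foldr reduce_step x acc) = abel x + abel acc" for x acc
    by (induction x) (simp_all add: abel_reduce_step add.assoc)
  from this[of w "[]"] show ?thesis by (simp add: reduce_eq_foldr)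
qed

lemma abel_mult: "abel (x \<otimes>\<^bsub>free_group n\<^esub> y) = abel x + abel y"
  by (simp add: mult_free_group abel_reduce abel_append)

lemma abel_inv:
  assumes "x \<in> carrier (free_group n)"
  shows "abel (inv\<^bsub>free_group n\<^esub> x) = - abel x"
proof -
  interpret group "free_group n" by (rule group_free_group)
  have "abel (x \<otimes>\<^bsub>free_group n\<^esub> inv\<^bsub>free_group n\<^esub> x) = 0"
    using assms by (simp add: one_free_group)
  then show ?thesis by (simp add: abel_mult eq_neg_iff_add_eq_0 add.commute)
qed

lemma abel_derived:
  assumes "w \<in> derived (free_group n) (carrier (free_group n))"
  shows "abel w = 0"
proof -
  interpret group "free_group n" by (rule group_free_group)
  have abel_commutator: "abel (h1 \<otimes>\<^bsub>free_group n\<^esub> h2 \<otimes>\<^bsub>free_group n\<^esub>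
      inv\<^bsub>free_group n\<^esub> h1 \<otimes>\<^bsub>free_group n\<^esub> inv\<^bsub>free_group n\<^esub> h2) = 0"
    if "h1 \<in> carrier (free_group n)" "h2 \<in> carrier (free_group n)" for h1 h2
    using that by (simp add: abel_mult abel_inv)
  from assms show ?thesis
    unfolding derived_def
  proof (induction rule: generate.induct)
    case (inv h)
    then have "h \<in> carrier (free_group n)" "abel h = 0"
      using abel_commutator by auto
    then show ?case by (simp add: abel_inv)
  qed (auto simp: one_free_group abel_mult abel_inv)
qed

section \<open>Walks in the Cayley graph of the free abelian group\<close>

text \<open>The edge (q, i) joins q and q + e_i. The letter g_i read at position p traverses (p, i)
  forwards; g_i^(-1) traverses (p - e_i, i) backwards, which the flag True records.\<close>
type_synonym edge = "(nat \<Rightarrow>\<^sub>0 int) \<times> nat"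

definition edge :: "(nat \<Rightarrow>\<^sub>0 int) \<Rightarrow> letter \<Rightarrow> edge" where
  "edge p l = (if snd l then p + letter_abel l else p, fst l)"

fun walk :: "(nat \<Rightarrow>\<^sub>0 int) \<Rightarrow> letter list \<Rightarrow> (edge \<times> bool) list" where
  "walk p [] = []"
| "walk p (l # v) = (edge p l, snd l) # walk (p + letter_abel l) v"

definition net_count :: "edge \<Rightarrow> (edge \<times> bool) list \<Rightarrow> int" where
  "net_count E xs = (\<Sum>(E', b)\<leftarrow>xs. if E' = E then sign b else 0)"

definition edge_exp :: "edge \<Rightarrow> nat \<Rightarrow>\<^sub>0 int" where
  "edge_exp E = - fst E - fst E - Poly_Mapping.single (snd E) 1"

definition walk_laurent :: "(edge \<times> bool) list \<Rightarrow> laurent" where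
  "walk_laurent xs = (\<Sum>(E, b)\<leftarrow>xs. Poly_Mapping.single (edge_exp E) (sign b))"

lemma net_count_Nil [simp]: "net_count E [] = 0"
  and net_count_Cons [simp]:
    "net_count E ((E', b) # xs) = (if E' = E then sign b else 0) + net_count E xs"
  by (simp_all add: net_count_def)

lemma walk_laurent_Nil [simp]: "walk_laurent [] = 0"
  and walk_laurent_Cons [simp]:
    "walk_laurent ((E, b) # xs) = Poly_Mapping.single (edge_exp E) (sign b) + walk_laurent xs"
  by (simp_all add: walk_laurent_def)

lemma edge_exp_edge: "edge_exp (edge p l) = - p - p - letter_abel l"
  by (auto simp: edge_exp_def edge_def letter_abel_def sign_def single_uminus)

text \<open>The coordinate \<open>i\<close> of \<open>edge_exp (q, i)\<close> is the only odd one.\<close>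
lemma inj_edge_exp: "inj edge_exp"
proof (rule injI)
  fix E E' :: edge
  assume eq: "edge_exp E = edge_exp E'"
  obtain q i q' j where E: "E = (q, i)" "E' = (q', j)" by fastforce
  have coord: "- 2 * Poly_Mapping.lookup q k - (if k = i then 1 else 0)
              = - 2 * Poly_Mapping.lookup q' k - (if k = j then 1 else 0)" for k
    using arg_cong[OF eq, of "\<lambda>p. Poly_Mapping.lookup p k"]
    by (simp only: E edge_exp_def fst_conv snd_conv lookup_minus lookup_uminus lookup_single)
       (simp add: when_def eq_commute)
  have "i = j"
    using coord[of i] by presburger
  moreover have "q = q'"
    using coord \<open>i = j\<close> by (intro poly_mapping_eqI) simp
  ultimately show "E = E'" by (simp add: E)
qed

lemma lookup_walk_laurent: "Poly_Mapping.lookup (walk_laurent xs) (edge_exp E) = net_count E xs"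
  by (induction xs) (auto simp: lookup_zero lookup_add lookup_single when_def inj_eq[OF inj_edge_exp])

lemma walk_edge_in_letters: "(E, b) \<in> set (walk p v) \<Longrightarrow> snd E \<in> fst ` set v"
  by (induction v arbitrary: p) (auto simp: edge_def)

lemma letter_mat_eq:
  "letter_mat l = (Poly_Mapping.single (letter_abel l) 1, 0, Poly_Mapping.single 0 (sign (snd l)),
                   Poly_Mapping.single (- letter_abel l) 1)"
  by (simp add: letter_mat_def lvar_def letter_abel_def sign_def single_uminus)

lemma mu1_eq_walk_laurent:
  "mu1 v = (Poly_Mapping.single (abel v) 1, 0,
            Poly_Mapping.single (p + p + abel v) 1 * walk_laurent (walk p v),
            Poly_Mapping.single (- abel v) 1)"
proof (induction v arbitrary: p)
  case Nil
  then show ?case by (simp add: mu1_def mat2_id_def)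
next
  case (Cons l v)
  have "mu1 (l # v) = mat2_mult (letter_mat l) (mu1 v)"
    by (simp add: mu1_def)
  also have "\<dots> = (Poly_Mapping.single (abel (l # v)) 1, 0,
      Poly_Mapping.single (p + p + abel (l # v)) 1 * walk_laurent (walk p (l # v)),
      Poly_Mapping.single (- abel (l # v)) 1)"
    unfolding Cons[of "p + letter_abel l"] letter_mat_eq mat2_mult_def
    by (simp add: edge_exp_edge mult_single distrib_left algebra_simps)
  finally show ?case .
qed

definition power_product ::
  "('a, 'b) monoid_scheme \<Rightarrow> (nat \<Rightarrow> 'a) \<Rightarrow> nat list \<Rightarrow> (nat \<Rightarrow>\<^sub>0 int) \<Rightarrow> 'a" where "power_product M g is p =
           foldr (\<lambda>i x. g i [^]\<^bsub>M\<^esub> Poly_Mapping.lookup p i \<otimes>\<^bsub>M\<^esub> x) is \<one>\<^bsub>M\<^esub>"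

definition word_eval :: "('a, 'b) monoid_scheme \<Rightarrow> (nat \<Rightarrow> 'a) \<Rightarrow> letter list \<Rightarrow> 'a" where
  "word_eval M a w = foldr (\<lambda>l x. a (fst l) [^]\<^bsub>M\<^esub> sign (snd l) \<otimes>\<^bsub>M\<^esub> x) w \<one>\<^bsub>M\<^esub>"

definition path_product ::
  "('a, 'b) monoid_scheme \<Rightarrow> (edge \<Rightarrow> 'a) \<Rightarrow> (edge \<times> bool) list \<Rightarrow> 'a" where
  "path_product M \<gamma> xs = foldr (\<lambda>(E, b) x. \<gamma> E [^]\<^bsub>M\<^esub> sign b \<otimes>\<^bsub>M\<^esub> x) xs \<one>\<^bsub>M\<^esub>"

definition schreier_gen ::
  "('a, 'b) monoid_scheme \<Rightarrow> ((nat \<Rightarrow>\<^sub>0 int) \<Rightarrow> 'a) \<Rightarrow> (nat \<Rightarrow> 'a) \<Rightarrow> edge \<Rightarrow> 'a" where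
  "schreier_gen M T a E =
     T (fst E) \<otimes>\<^bsub>M\<^esub> a (snd E) \<otimes>\<^bsub>M\<^esub> inv\<^bsub>M\<^esub> T (fst E + Poly_Mapping.single (snd E) 1)"

lemma power_product_Nil [simp]: "power_product M g [] p = \<one>\<^bsub>M\<^esub>"
  and power_product_Cons [simp]:
    "power_product M g (i # is) p = g i [^]\<^bsub>M\<^esub> Poly_Mapping.lookup p i \<otimes>\<^bsub>M\<^esub> power_product M g is p"
  by (simp_all add: power_product_def)

lemma word_eval_Nil [simp]: "word_eval M a [] = \<one>\<^bsub>M\<^esub>"
  and word_eval_Cons [simp]:
    "word_eval M a (l # w) = a (fst l) [^]\<^bsub>M\<^esub> sign (snd l) \<otimes>\<^bsub>M\<^esub> word_eval M a w"
  by (simp_all add: word_eval_def)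

lemma path_product_Nil [simp]: "path_product M \<gamma> [] = \<one>\<^bsub>M\<^esub>"
  and path_product_Cons [simp]:
    "path_product M \<gamma> ((E, b) # xs) = \<gamma> E [^]\<^bsub>M\<^esub> sign b \<otimes>\<^bsub>M\<^esub> path_product M \<gamma> xs"
  by (simp_all add: path_product_def)

lemma (in group) power_product_closed:
  "g ` set is \<subseteq> carrier G \<Longrightarrow> power_product G g is p \<in> carrier G"
  by (induction "is") auto

lemma (in group) power_product_zero: "power_product G g is 0 = \<one>"
  by (induction "is") simp_all

lemma (in group) path_product_closed:
  "\<gamma> ` fst ` set xs \<subseteq> carrier G \<Longrightarrow> path_product G \<gamma> xs \<in> carrier G"
  by (induction xs) auto

lemma (in group_hom) power_product_hom:
  "g ` set is \<subseteq> carrier G \<Longrightarrow> h (power_product G g is p) = power_product H (h \<circ> g) is p"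
  by (induction "is") (simp_all add: G.power_product_closed hom_int_pow)

lemma (in group_hom) path_product_hom:
  "\<gamma> ` fst ` set xs \<subseteq> carrier G \<Longrightarrow> h (path_product G \<gamma> xs) = path_product H (h \<circ> \<gamma>) xs"
  by (induction xs) (auto simp: G.path_product_closed hom_int_pow)

lemma (in group) path_product_consistent:
  assumes "subgroup H G" "\<gamma> ` fst ` set xs \<subseteq> H"
  shows "path_product (G\<lparr>carrier := H\<rparr>) \<gamma> xs = path_product G \<gamma> xs"
  using assms(2) by (induction xs) (auto simp: int_pow_consistent[OF assms(1)])

lemma (in comm_group) power_product_add_single:
  assumes "distinct is" "j \<in> set is" "g ` set is \<subseteq> carrier G"
  shows "power_product G g is (p + Poly_Mapping.single j 1) = power_product G g is p \<otimes> g j"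
  using assms
proof (induction "is")
  case (Cons i "is")
  then have g: "g i \<in> carrier G" "g j \<in> carrier G" "g ` set is \<subseteq> carrier G" by auto
  show ?case
  proof (cases "i = j")
    case True
    then have "power_product G g is (p + Poly_Mapping.single j 1) = power_product G g is p"
      using Cons.prems(1) by (induction "is") (auto simp: lookup_add lookup_single when_def)
    then show ?thesis
      using True g by (simp add: lookup_add int_pow_mult power_product_closed m_ac)
  next
    case False
    then show ?thesis
      using Cons g by (simp add: lookup_add lookup_single when_def power_product_closed m_assoc)
  qed
qed simp

lemma net_count_filter:
  "net_count E' (filter (\<lambda>x. fst x \<noteq> E) xs) = (if E' = E then 0 else net_count E' xs)"
  by (induction xs) auto

lemma (in comm_group) path_product_filter:
  "\<gamma> ` fst ` set xs \<subseteq> carrier G \<Longrightarrow> \<gamma> E \<in> carrier G \<Longrightarrow>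
   path_product G \<gamma> xs = \<gamma> E [^] net_count E xs \<otimes> path_product G \<gamma> (filter (\<lambda>x. fst x \<noteq> E) xs)"
proof (induction xs)
  case (Cons x xs)
  obtain E' b where x: "x = (E', b)" by fastforce
  have "\<gamma> ` fst ` set (filter (\<lambda>x. fst x \<noteq> E) xs) \<subseteq> carrier G"
    using Cons.prems by auto
  then have "path_product G \<gamma> (filter (\<lambda>x. fst x \<noteq> E) xs) \<in> carrier G"
    by (rule path_product_closed)
  then show ?case
    using Cons x by (auto simp: int_pow_mult m_assoc m_lcomm)
qed simp

lemma (in comm_group) path_product_eq_one:
  "\<gamma> ` fst ` set xs \<subseteq> carrier G \<Longrightarrow> \<forall>E. net_count E xs = 0 \<Longrightarrow> path_product G \<gamma> xs = \<one>"
proof (induction "length xs" arbitrary: xs rule: less_induct)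
  case less
  show ?case
  proof (cases xs)
    case (Cons x ys)
    let ?zs = "filter (\<lambda>y. fst y \<noteq> fst x) xs"
    have "length ?zs < length xs"
      using Cons by (simp add: le_imp_less_Suc)
    moreover have "\<gamma> ` fst ` set ?zs \<subseteq> carrier G" "\<forall>E. net_count E ?zs = 0"
      using less.prems by (auto simp: net_count_filter)
    ultimately have "path_product G \<gamma> ?zs = \<one>"
      by (rule less.hyps)
    moreover have "net_count (fst x) xs = 0"
      using less.prems(2) by blast
    ultimately show ?thesis
      using path_product_filter[OF less.prems(1), of "fst x"] less.prems(1) Cons by simp
  qed simp
qed

lemma (in group) schreier_gen_edge:
  assumes "\<And>q. T q \<in> carrier G" "a (fst l) \<in> carrier G"
  shows "T p \<otimes> a (fst l) [^] sign (snd l) \<otimes> inv T (p + letter_abel l)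
         = schreier_gen G T a (edge p l) [^] sign (snd l)"
proof (cases "snd l")
  case True
  let ?q = "p + letter_abel l"
  have shifted: "?q + Poly_Mapping.single (fst l) 1 = p"
    using True by (simp add: letter_abel_def sign_def single_uminus)
  have "schreier_gen G T a (edge p l) = T ?q \<otimes> a (fst l) \<otimes> inv T p"
    by (simp only: schreier_gen_def edge_def True if_True fst_conv snd_conv shifted)
  then show ?thesis
    using True assms by (simp add: sign_def int_pow_neg inv_mult_group m_assoc)
next
  case False
  then show ?thesis
    using assms by (simp add: schreier_gen_def edge_def sign_def letter_abel_def)
qed

lemma (in group) word_eval_closed:
  "a ` fst ` set w \<subseteq> carrier G \<Longrightarrow> word_eval G a w \<in> carrier G"
  by (induction w) auto

lemma (in group) word_eval_telescope:
  assumes "\<And>q. T q \<in> carrier G" "a ` fst ` set w \<subseteq> carrier G"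
  shows "T p \<otimes> word_eval G a w \<otimes> inv T (p + abel w) = path_product G (schreier_gen G T a) (walk p w)"
  using assms(2)
proof (induction w arbitrary: p)
  case Nil
  then show ?case using assms(1) by simp
next
  case (Cons l w)
  let ?q = "p + letter_abel l"
  have closed: "T p \<in> carrier G" "T ?q \<in> carrier G" "T (?q + abel w) \<in> carrier G"
    "a (fst l) \<in> carrier G" "word_eval G a w \<in> carrier G"
    using assms(1) Cons.prems by (auto intro!: word_eval_closed)
  have "T p \<otimes> word_eval G a (l # w) \<otimes> inv T (p + abel (l # w))
        = (T p \<otimes> a (fst l) [^] sign (snd l) \<otimes> inv T ?q) \<otimes> (T ?q \<otimes> word_eval G a w \<otimes> inv T (?q + abel w))"
    using closed by (simp add: add.assoc m_assoc flip: m_assoc[of "inv T ?q"])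
  also have "\<dots> = path_product G (schreier_gen G T a) (walk p (l # w))"
    using Cons schreier_gen_edge[of T a l p, OF assms(1) closed(4)] by simp
  finally show ?case .
qed

section \<open>Membership in derived subgroups\<close>

lemma (in group) derived_quotient:
  assumes "subgroup H G"
  obtains \<pi> :: "'a \<Rightarrow> 'a set" and Q :: "'a set monoid"
  where "comm_group Q" "group_hom (G\<lparr>carrier := H\<rparr>) Q \<pi>"
    "\<And>x. x \<in> H \<Longrightarrow> \<pi> x = \<one>\<^bsub>Q\<^esub> \<Longrightarrow> x \<in> derived G H"
proof -
  let ?H = "G\<lparr>carrier := H\<rparr>"
  interpret N: normal "derived G H" ?H
    by (rule derived_subgroup_is_normal[OF assms])
  interpret Q: comm_group "?H Mod derived G H"
    by (rule derived_quot_of_subgroup_is_comm_group[OF assms])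
  show thesis
  proof (rule that)
    show "comm_group (?H Mod derived G H)" ..
    show "group_hom ?H (?H Mod derived G H) (\<lambda>x. derived G H #>\<^bsub>?H\<^esub> x)"
      by (intro group_hom.intro N.is_group Q.is_group group_hom_axioms.intro N.r_coset_hom_Mod)
    show "x \<in> derived G H"
      if "x \<in> H" "derived G H #>\<^bsub>?H\<^esub> x = \<one>\<^bsub>?H Mod derived G H\<^esub>" for x
      using that N.coset_join1[OF _ _ N.subgroup_axioms] by simp
  qed
qed

lemma (in group) schreier_gen_in_derived:
  assumes "distinct is" "i \<in> set is" "g ` set is \<subseteq> carrier G"
  shows "schreier_gen G (power_product G g is) g (q, i) \<in> derived G (carrier G)"
proof -
  obtain Q :: "'a set monoid" and \<pi> :: "'a \<Rightarrow> 'a set" where "comm_group Q" "group_hom G Q \<pi>"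
    and ker: "\<And>x. x \<in> carrier G \<Longrightarrow> \<pi> x = \<one>\<^bsub>Q\<^esub> \<Longrightarrow> x \<in> derived G (carrier G)"
    by (rule derived_quotient[OF subgroup_self, simplified]) blast
  interpret Q: comm_group Q by fact
  interpret \<pi>: group_hom G Q \<pi> by fact
  let ?T = "power_product G g is" and ?P = "power_product Q (\<pi> \<circ> g) is"
  have gi: "g i \<in> carrier G" and T: "?T p \<in> carrier G" for p
    using assms by (auto intro: power_product_closed)
  have gQ: "(\<pi> \<circ> g) ` set is \<subseteq> carrier Q"
    using assms(3) by auto
  have hom: "\<pi> (?T p) = ?P p" for p
    by (rule \<pi>.power_product_hom[OF assms(3)])
  have step: "?P (q + Poly_Mapping.single i 1) = ?P q \<otimes>\<^bsub>Q\<^esub> \<pi> (g i)"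
    using Q.power_product_add_single[OF assms(1,2) gQ] by simp
  have "\<pi> (schreier_gen G ?T g (q, i))
        = \<pi> (?T q) \<otimes>\<^bsub>Q\<^esub> \<pi> (g i) \<otimes>\<^bsub>Q\<^esub> inv\<^bsub>Q\<^esub> \<pi> (?T (q + Poly_Mapping.single i 1))"
    using T gi by (simp add: schreier_gen_def)
  also have "\<dots> = (?P q \<otimes>\<^bsub>Q\<^esub> \<pi> (g i)) \<otimes>\<^bsub>Q\<^esub> inv\<^bsub>Q\<^esub> (?P q \<otimes>\<^bsub>Q\<^esub> \<pi> (g i))"
    by (simp only: hom step)
  also have "\<dots> = \<one>\<^bsub>Q\<^esub>"
    using gQ gi by (simp add: Q.power_product_closed)
  finally show ?thesis
    using T gi by (intro ker) (simp_all add: schreier_gen_def)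
qed

lemma (in group) path_product_in_derived:
  assumes "subgroup H G" "\<gamma> ` fst ` set xs \<subseteq> H" "\<forall>E. net_count E xs = 0"
  shows "path_product G \<gamma> xs \<in> derived G H"
proof -
  obtain Q :: "'a set monoid" and \<pi> :: "'a \<Rightarrow> 'a set"
    where "comm_group Q" "group_hom (G\<lparr>carrier := H\<rparr>) Q \<pi>"
    and ker: "\<And>x. x \<in> H \<Longrightarrow> \<pi> x = \<one>\<^bsub>Q\<^esub> \<Longrightarrow> x \<in> derived G H"
    by (rule derived_quotient[OF assms(1)]) blast
  interpret Q: comm_group Q by fact
  interpret \<pi>: group_hom "G\<lparr>carrier := H\<rparr>" Q \<pi> by fact
  have H: "\<gamma> ` fst ` set xs \<subseteq> carrier (G\<lparr>carrier := H\<rparr>)"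
    using assms(2) by simp
  have "path_product G \<gamma> xs = path_product (G\<lparr>carrier := H\<rparr>) \<gamma> xs"
    using path_product_consistent[OF assms(1,2)] by simp
  moreover have "path_product (G\<lparr>carrier := H\<rparr>) \<gamma> xs \<in> H"
    using \<pi>.G.path_product_closed[OF H] by simp
  moreover have "(\<pi> \<circ> \<gamma>) ` fst ` set xs \<subseteq> carrier Q"
    using H by (force simp: image_comp[symmetric])
  then have "\<pi> (path_product (G\<lparr>carrier := H\<rparr>) \<gamma> xs) = \<one>\<^bsub>Q\<^esub>"
    using assms(3) by (simp add: \<pi>.path_product_hom[OF H] Q.path_product_eq_one)
  ultimately show ?thesis
    using ker by simp
qed

section \<open>Schreier generators of the commutator subgroup of the free group\<close>

definition free_gen :: "nat \<Rightarrow> letter list" where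
  "free_gen i = [(i, False)]"

definition free_schreier_gen :: "nat \<Rightarrow> edge \<Rightarrow> letter list" where
  "free_schreier_gen n =
     schreier_gen (free_group n) (power_product (free_group n) free_gen [1..<Suc n]) free_gen"

lemma free_gen_in_carrier: "i \<in> {1..n} \<Longrightarrow> free_gen i \<in> carrier (free_group n)"
  by (simp add: free_gen_def carrier_free_group)

lemma free_gen_pow_sign:
  assumes "i \<in> {1..n}"
  shows "free_gen i [^]\<^bsub>free_group n\<^esub> sign b = [(i, b)]"
proof -
  interpret group "free_group n" by (rule group_free_group)
  have "inv\<^bsub>free_group n\<^esub> free_gen i = [(i, True)]"
    using assms by (intro inv_equality)
      (simp_all add: free_gen_def mult_free_group one_free_group carrier_free_group reduce_def
        inv_letter_def)
  then show ?thesis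
    using free_gen_in_carrier[OF assms] by (simp add: sign_def int_pow_neg free_gen_def)
qed

lemma word_eval_free_gen:
  "\<forall>l\<in>set w. fst l \<in> {1..n} \<Longrightarrow> word_eval (free_group n) free_gen w = reduce w"
proof (induction w)
  case (Cons l w)
  have "reduce ([l] @ reduce w) = reduce (l # w)"
    by (simp only: reduce_append reduce_reduced[OF reduced_reduce]) (simp add: reduce_eq_foldr)
  then show ?case
    using Cons by (simp add: free_gen_pow_sign[where b = "snd l"] mult_free_group)
qed (simp add: one_free_group reduce_def)

lemma free_schreier_gen_in_derived:
  "i \<in> {1..n} \<Longrightarrow> free_schreier_gen n (q, i) \<in> derived (free_group n) (carrier (free_group n))"
  unfolding free_schreier_gen_def
  by (rule group.schreier_gen_in_derived[OF group_free_group]) (auto intro: free_gen_in_carrier)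

lemma free_group_eq_path_product:
  assumes "w \<in> carrier (free_group n)" "abel w = 0"
  shows "w = path_product (free_group n) (free_schreier_gen n) (walk 0 w)"
proof -
  interpret group "free_group n" by (rule group_free_group)
  let ?T = "power_product (free_group n) free_gen [1..<Suc n]"
  have T: "?T p \<in> carrier (free_group n)" for p
    by (rule power_product_closed) (auto intro: free_gen_in_carrier)
  have letters: "\<forall>l\<in>set w. fst l \<in> {1..n}" and "reduced w"
    using assms(1) by (simp_all add: carrier_free_group)
  then have "w = ?T 0 \<otimes>\<^bsub>free_group n\<^esub> word_eval (free_group n) free_gen w
                 \<otimes>\<^bsub>free_group n\<^esub> inv\<^bsub>free_group n\<^esub> ?T (0 + abel w)"
    using assms by (simp add: power_product_zero word_eval_free_gen reduce_reduced)
  also have "\<dots> = path_product (free_group n) (free_schreier_gen n) (walk 0 w)"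
    unfolding free_schreier_gen_def
    by (rule word_eval_telescope[OF T])
      (use letters in \<open>force simp: free_gen_def carrier_free_group\<close>)
  finally show ?thesis .
qed

theorem lemma5p1:
  fixes n :: nat and w :: "letter list"
  assumes "n \<ge> 2"
    and "w \<in> derived (free_group n) (carrier (free_group n))"
    and "w \<notin> derived (free_group n) (derived (free_group n) (carrier (free_group n)))"
  shows "\<exists>L :: laurent. L \<noteq> 0 \<and> mu1 w = (1, 0, L, 1)"
proof -
  interpret F: group "free_group n" by (rule group_free_group)
  have w: "w \<in> carrier (free_group n)"
    using assms(2) F.derived_in_carrier by blast
  have abel: "abel w = 0"
    by (rule abel_derived[OF assms(2)])
  then have "mu1 w = (1, 0, walk_laurent (walk 0 w), 1)"
    using mu1_eq_walk_laurent[of w 0] by simp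
  moreover have "walk_laurent (walk 0 w) \<noteq> 0"
  proof
    assume "walk_laurent (walk 0 w) = 0"
    then have "\<forall>E. net_count E (walk 0 w) = 0"
      by (metis lookup_walk_laurent lookup_zero)
    moreover have "free_schreier_gen n ` fst ` set (walk 0 w)
                   \<subseteq> derived (free_group n) (carrier (free_group n))"
      using w walk_edge_in_letters
      by (force simp: carrier_free_group intro: free_schreier_gen_in_derived)
    ultimately have "path_product (free_group n) (free_schreier_gen n) (walk 0 w)
                     \<in> derived (free_group n) (derived (free_group n) (carrier (free_group n)))"
      by (intro F.path_product_in_derived F.derived_is_subgroup) auto
    then show False
      using assms(3) free_group_eq_path_product[OF w abel] by simp
  qed
  ultimately show ?thesis by blast
qed

end
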